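(* Let $n\neq 1$ be a real number, $k_n=n-1$, and $k_0\in\mathbb{R}$. On the phase space with canonical coordinates $(r,\phi,p_r,p_\phi)$, $r>0$, consider $$H_{nc}=\tfrac12 r^{2n}\Big(p_r^2+\tfrac{p_\phi^2}{r^2}\Big)+k_0r^{n-1}.$$ With $P_1=r^n\big(p_r\cos(k_n\phi)+\tfrac1r p_\phi\sin(k_n\phi)\big)$ and $P_2=r^n\big(p_r\sin(k_n\phi)-\tfrac1r p_\phi\cos(k_n\phi)\big)$, the functions $$J_1=p_\phi,\qquad J_2=P_2p_\phi-k_0\cos(k_n\phi),\qquad J_3=P_1p_\phi+k_0\sin(k_n\phi)$$ are constants of motion of $H_{nc}$, i.e. they Poisson commute with $H_{nc}$; hence $H_{nc}$ is superintegrable.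
   Context: The Poisson bracket is the canonical one in $(r,\phi,p_r,p_\phi)$. A constant of motion of $H$ is a function $F$ with $\{F,H\}=0$. *)

theory Defs
  imports "HOL-Analysis.Analysis"
begin

text \<open>Phase-space functions in canonical coordinates (r, phi, p_r, p_phi), curried.\<close>
type_synonym phasefun = "real \<Rightarrow> real \<Rightarrow> real \<Rightarrow> real \<Rightarrow> real"

definition poisson :: "phasefun \<Rightarrow> phasefun \<Rightarrow> phasefun" where
  "poisson F G r ph pr pph =
     deriv (\<lambda>x. F x ph pr pph) r * deriv (\<lambda>x. G r ph x pph) pr
   - deriv (\<lambda>x. F r ph x pph) pr * deriv (\<lambda>x. G x ph pr pph) r
   + deriv (\<lambda>x. F r x pr pph) ph * deriv (\<lambda>x. G r ph pr x) pph
   - deriv (\<lambda>x. F r ph pr x) pph * deriv (\<lambda>x. G r x pr pph) ph"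

definition Hnc :: "real \<Rightarrow> real \<Rightarrow> phasefun" where
  "Hnc n k0 r ph pr pph =
     (1/2) * r powr (2*n) * (pr\<^sup>2 + pph\<^sup>2 / r\<^sup>2) + k0 * r powr (n - 1)"

definition P1 :: "real \<Rightarrow> phasefun" where
  "P1 n r ph pr pph = r powr n * (pr * cos ((n - 1) * ph) + (1/r) * pph * sin ((n - 1) * ph))"

definition P2 :: "real \<Rightarrow> phasefun" where
  "P2 n r ph pr pph = r powr n * (pr * sin ((n - 1) * ph) - (1/r) * pph * cos ((n - 1) * ph))"

definition J1 :: phasefun where
  "J1 r ph pr pph = pph"

definition J2 :: "real \<Rightarrow> real \<Rightarrow> phasefun" where
  "J2 n k0 r ph pr pph = P2 n r ph pr pph * pph - k0 * cos ((n - 1) * ph)"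

definition J3 :: "real \<Rightarrow> real \<Rightarrow> phasefun" where
  "J3 n k0 r ph pr pph = P1 n r ph pr pph * pph + k0 * sin ((n - 1) * ph)"

end

theory Submission
  imports Defs
begin

text \<open>
  Write \<open>a = r\<^sup>n\<close>, \<open>c = cos ((n - 1) \<phi>)\<close> and \<open>s = sin ((n - 1) \<phi>)\<close>.
  Every first partial derivative of \<open>H\<^sub>n\<^sub>c\<close>, \<open>J\<^sub>2\<close> and \<open>J\<^sub>3\<close> is a polynomial in
  \<open>a\<close>, \<open>1/r\<close>, \<open>c\<close>, \<open>s\<close> and the momenta: differentiating the angle produces the same
  factor \<open>n - 1\<close> as differentiating the potential \<open>k\<^sub>0 r\<^bsup>n-1\<^esup>\<close>. Inserting them into the
  canonical bracket, \<open>{J\<^sub>2, H\<^sub>n\<^sub>c}\<close> and \<open>{J\<^sub>3, H\<^sub>n\<^sub>c}\<close> vanish by a rational identity in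
  these quantities (not even \<open>c\<^sup>2 + s\<^sup>2 = 1\<close> is needed), and \<open>{J\<^sub>1, H\<^sub>n\<^sub>c}\<close> vanishes
  because \<open>H\<^sub>n\<^sub>c\<close> does not depend on \<open>\<phi>\<close>.
\<close>

lemma poisson_eq_partials:
  assumes "((\<lambda>x. F x ph pr pph) has_real_derivative Fr) (at r)"
    and "((\<lambda>x. F r x pr pph) has_real_derivative Fph) (at ph)"
    and "((\<lambda>x. F r ph x pph) has_real_derivative Fpr) (at pr)"
    and "((\<lambda>x. F r ph pr x) has_real_derivative Fpph) (at pph)"
    and "((\<lambda>x. G x ph pr pph) has_real_derivative Gr) (at r)"
    and "((\<lambda>x. G r x pr pph) has_real_derivative Gph) (at ph)"
    and "((\<lambda>x. G r ph x pph) has_real_derivative Gpr) (at pr)"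
    and "((\<lambda>x. G r ph pr x) has_real_derivative Gpph) (at pph)"
  shows "poisson F G r ph pr pph = Fr * Gpr - Fpr * Gr + Fph * Gpph - Fpph * Gph"
  using assms by (simp add: poisson_def DERIV_imp_deriv)

lemma Hnc_alt_def:
  "Hnc n k0 r ph pr pph = 1/2 * (r powr n)\<^sup>2 * (pr\<^sup>2 + pph\<^sup>2 / r\<^sup>2) + k0 * r powr (n - 1)"
proof -
  have "r powr (2 * n) = (r powr n)\<^sup>2"
    by (metis mult_2 powr_add power2_eq_square)
  then show ?thesis
    by (simp add: Hnc_def)
qed

lemma Hnc_partials:
  fixes n k0 r ph pr pph :: real
  assumes r: "r > 0"
  defines "a \<equiv> r powr n"
  shows "((\<lambda>x. Hnc n k0 x ph pr pph) has_real_derivative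
            n * a\<^sup>2 / r * (pr\<^sup>2 + pph\<^sup>2 / r\<^sup>2) - a\<^sup>2 * pph\<^sup>2 / r ^ 3 + k0 * (n - 1) * a / r\<^sup>2) (at r)"
    and "((\<lambda>x. Hnc n k0 r x pr pph) has_real_derivative 0) (at ph)"
    and "((\<lambda>x. Hnc n k0 r ph x pph) has_real_derivative a\<^sup>2 * pr) (at pr)"
    and "((\<lambda>x. Hnc n k0 r ph pr x) has_real_derivative a\<^sup>2 * pph / r\<^sup>2) (at pph)"
  unfolding Hnc_alt_def a_def
  by (rule derivative_eq_intros refl
      | simp add: r less_imp_le less_imp_neq[OF r, symmetric] abs_of_pos powr_diff
          field_simps eval_nat_numeral)+

lemma J2_partials:
  fixes n k0 r ph pr pph :: real
  assumes r: "r > 0"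
  defines "a \<equiv> r powr n" and "c \<equiv> cos ((n - 1) * ph)" and "s \<equiv> sin ((n - 1) * ph)"
  shows "((\<lambda>x. J2 n k0 x ph pr pph) has_real_derivative
            pph * (n * a / r * (pr * s - pph * c / r) + a * pph * c / r\<^sup>2)) (at r)"
    and "((\<lambda>x. J2 n k0 r x pr pph) has_real_derivative
            pph * a * (n - 1) * (pr * c + pph * s / r) + k0 * (n - 1) * s) (at ph)"
    and "((\<lambda>x. J2 n k0 r ph x pph) has_real_derivative a * s * pph) (at pr)"
    and "((\<lambda>x. J2 n k0 r ph pr x) has_real_derivative a * pr * s - 2 * a * pph * c / r) (at pph)"
  unfolding J2_def P2_def a_def c_def s_def
  by (rule derivative_eq_intros refl
      | simp add: r less_imp_le less_imp_neq[OF r, symmetric] abs_of_pos powr_diff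
          field_simps eval_nat_numeral)+

lemma J3_partials:
  fixes n k0 r ph pr pph :: real
  assumes r: "r > 0"
  defines "a \<equiv> r powr n" and "c \<equiv> cos ((n - 1) * ph)" and "s \<equiv> sin ((n - 1) * ph)"
  shows "((\<lambda>x. J3 n k0 x ph pr pph) has_real_derivative
            pph * (n * a / r * (pr * c + pph * s / r) - a * pph * s / r\<^sup>2)) (at r)"
    and "((\<lambda>x. J3 n k0 r x pr pph) has_real_derivative
            pph * a * (n - 1) * (pph * c / r - pr * s) + k0 * (n - 1) * c) (at ph)"
    and "((\<lambda>x. J3 n k0 r ph x pph) has_real_derivative a * c * pph) (at pr)"
    and "((\<lambda>x. J3 n k0 r ph pr x) has_real_derivative a * pr * c + 2 * a * pph * s / r) (at pph)"
  unfolding J3_def P1_def a_def c_def s_def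
  by (rule derivative_eq_intros refl
      | simp add: r less_imp_le less_imp_neq[OF r, symmetric] abs_of_pos powr_diff
          field_simps eval_nat_numeral)+

lemma poisson_J1_Hnc: "poisson J1 (Hnc n k0) r ph pr pph = 0"
  by (simp add: poisson_def J1_def Hnc_def)

lemma poisson_J2_Hnc:
  assumes "r > 0"
  shows "poisson (J2 n k0) (Hnc n k0) r ph pr pph = 0"
  using assms
  by (simp add: poisson_eq_partials[OF J2_partials[OF assms] Hnc_partials[OF assms]]
      field_simps eval_nat_numeral)

lemma poisson_J3_Hnc:
  assumes "r > 0"
  shows "poisson (J3 n k0) (Hnc n k0) r ph pr pph = 0"
  using assms
  by (simp add: poisson_eq_partials[OF J3_partials[OF assms] Hnc_partials[OF assms]]
      field_simps eval_nat_numeral)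

theorem mainTheorem6:
  fixes n k0 :: real
  assumes "n \<noteq> 1"
  shows "\<forall>r ph pr pph. r > 0 \<longrightarrow>
           poisson J1 (Hnc n k0) r ph pr pph = 0 \<and>
           poisson (J2 n k0) (Hnc n k0) r ph pr pph = 0 \<and>
           poisson (J3 n k0) (Hnc n k0) r ph pr pph = 0"
  by (simp add: poisson_J1_Hnc poisson_J2_Hnc poisson_J3_Hnc)

end
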